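(* Let $\epsilon>0$ and let $C,D$ be symmetric positive-definite $n\times n$ matrices. Then $$\frac4\epsilon D^{1/2}\left(I+\left(I+\frac{16}{\epsilon^2}D^{1/2}CD^{1/2}\right)^{1/2}\right)^{-1}D^{1/2}=I-\frac\epsilon4C^{-1/2}\left(I+\frac4\epsilon C-\left(I+\frac{16}{\epsilon^2}C^{1/2}DC^{1/2}\right)^{1/2}\right)C^{-1/2}.$$
   Context: Square roots of symmetric positive-definite matrices are the principal (symmetric positive-definite) square roots. *)

theory Defs
  imports "HOL-Analysis.Analysis"
begin

definition sym_matrix :: "real^'n^'n \<Rightarrow> bool" where
  "sym_matrix A \<longleftrightarrow> transpose A = A"

definition pos_def :: "real^'n^'n \<Rightarrow> bool" where
  "pos_def A \<longleftrightarrow> sym_matrix A \<and> (\<forall>x. x \<noteq> 0 \<longrightarrow> x \<bullet> (A *v x) > 0)"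

definition matrix_sqrt :: "real^'n^'n \<Rightarrow> real^'n^'n" where
  "matrix_sqrt A = (THE B. pos_def B \<and> B ** B = A)"

end

theory Submission
  imports Defs
begin

(*
  Write a = 4/eps, R = C^(1/2), T = a D^(1/2), P = (I + T C T)^(1/2) and K = (I + P)^(-1).
  Since P^2 - I = (I + P)(P - I), we get K (T C T) K = (P - I) K, hence 2K + K (T C T) K = I,
  so Y = T K T solves 2Y + Y C Y = T^2 = a^2 D.  Therefore Q = I + R Y R is positive definite with
  Q^2 = I + R (2Y + Y C Y) R = I + a^2 R D R, i.e. Q is the square root on the right-hand side.
  Substituting it, the right-hand side collapses to (1/a) Y = a D^(1/2) K D^(1/2), the left-hand side.
  Existence and uniqueness of principal square roots rest on the spectral theorem for symmetric
  matrices, obtained by maximising the Rayleigh quotient on invariant subspaces.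
*)

lemma matrix_add_rdistrib: "(A + B) ** C = A ** C + B ** C"
  by (vector matrix_matrix_mult_def sum.distrib[symmetric] field_simps)

lemma matrix_diff_ldistrib:
  fixes A :: "'a::ring_1^'n^'m"
  shows "A ** (B - C) = A ** B - A ** C"
  by (vector matrix_matrix_mult_def sum_subtractf[symmetric] field_simps)

lemma matrix_diff_rdistrib:
  fixes A :: "'a::ring_1^'n^'m"
  shows "(A - B) ** C = A ** C - B ** C"
  by (vector matrix_matrix_mult_def sum_subtractf[symmetric] field_simps)

lemmas matrix_ring_simps = matrix_add_ldistrib matrix_add_rdistrib matrix_diff_ldistrib
  matrix_diff_rdistrib matrix_mul_assoc matrix_scalar_ac scalar_matrix_assoc[symmetric]

lemma transpose_add: "transpose (A + B) = transpose A + transpose (B :: 'a::semiring_1^'n^'m)"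
  by (simp add: transpose_def vec_eq_iff)

lemma transpose_diff: "transpose (A - B) = transpose A - transpose (B :: 'a::ring_1^'n^'m)"
  by (simp add: transpose_def vec_eq_iff)

lemma matrix_inv_right:
  "invertible A \<Longrightarrow> A ** matrix_inv A = mat 1"
  unfolding invertible_def matrix_inv_def by (rule someI_ex[THEN conjunct1])

lemma matrix_inv_left:
  "invertible A \<Longrightarrow> matrix_inv A ** A = mat 1"
  unfolding invertible_def matrix_inv_def by (rule someI_ex[THEN conjunct2])

lemma matrix_inv_congruence_cancel:
  assumes "invertible R"
  shows "matrix_inv R ** (R ** X ** R) ** matrix_inv R = X"
  using assms by (simp add: matrix_inv_right flip: matrix_mul_assoc)
    (simp add: matrix_inv_left matrix_mul_assoc)

lemma sym_matrix_inner:
  assumes "sym_matrix A"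
  shows "(A *v x) \<bullet> y = x \<bullet> (A *v y)"
  by (metis assms dot_lmul_matrix sym_matrix_def transpose_matrix_vector)

lemma sym_matrixI:
  fixes A :: "real^'n^'n"
  assumes "\<And>x y. (A *v x) \<bullet> y = x \<bullet> (A *v y)"
  shows "sym_matrix A"
proof -
  have "transpose A *v y = A *v y" for y
    by (metis assms dot_lmul_matrix transpose_matrix_vector vector_eq_rdot)
  then show ?thesis
    unfolding sym_matrix_def by (simp add: matrix_eq)
qed

lemma quadratic_nonpos_imp_linear_coeff_zero:
  fixes b c :: real
  assumes "\<And>t. 2 * t * b + t^2 * c \<le> 0"
  shows "b = 0"
proof -
  define s where "s = \<bar>c\<bar> + 1"
  have "s > 0" "2 * s + c > 0"
    unfolding s_def by (cases "c \<ge> 0"; simp)+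
  have "2 * (b / s) * b + (b / s)^2 * c \<le> 0"
    by (rule assms)
  then have "b^2 * (2 * s + c) \<le> 0"
    using \<open>s > 0\<close> by (simp add: field_simps power2_eq_square)
  with \<open>2 * s + c > 0\<close> show "b = 0"
    by (simp add: mult_le_0_iff)
qed

lemma rayleigh_maximizer_eigenvector:
  fixes A :: "real^'n^'n"
  assumes "sym_matrix A" "subspace V" "\<And>y. y \<in> V \<Longrightarrow> A *v y \<in> V"
    and "x \<in> V" "x \<bullet> x = 1"
    and max: "\<And>y. y \<in> V \<Longrightarrow> y \<bullet> (A *v y) \<le> (x \<bullet> (A *v x)) * (y \<bullet> y)"
  shows "A *v x = (x \<bullet> (A *v x)) *\<^sub>R x"
proof -
  define l where "l = x \<bullet> (A *v x)"
  define w where "w = A *v x - l *\<^sub>R x"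
  \<comment> \<open>Perturbing \<open>x\<close> along \<open>w\<close> gives a quadratic in \<open>t\<close> that is never positive and has linear coefficient \<open>2 |w|\<^sup>2\<close>.\<close>
  have "w \<in> V"
    unfolding w_def using assms(2-4) by (simp add: subspace_diff subspace_scale)
  have "w \<bullet> (A *v x) - l * (w \<bullet> x) = w \<bullet> w"
    by (simp add: w_def inner_diff_right)
  have "2 * t * (w \<bullet> w) + t^2 * (w \<bullet> (A *v w) - l * (w \<bullet> w)) \<le> 0" for t
  proof -
    have "x + t *\<^sub>R w \<in> V"
      using assms(2,4) \<open>w \<in> V\<close> by (simp add: subspace_add subspace_scale)
    from max[OF this] have
      "l + 2 * t * (w \<bullet> (A *v x)) + t^2 * (w \<bullet> (A *v w))
        \<le> l * (1 + 2 * t * (w \<bullet> x) + t^2 * (w \<bullet> w))"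
      using sym_matrix_inner[OF assms(1), of x w] \<open>x \<bullet> x = 1\<close>
      by (simp add: l_def algebra_simps inner_commute power2_eq_square)
    with \<open>w \<bullet> (A *v x) - l * (w \<bullet> x) = w \<bullet> w\<close> show ?thesis
      by (simp add: algebra_simps)
  qed
  then have "w \<bullet> w = 0"
    by (rule quadratic_nonpos_imp_linear_coeff_zero)
  then show ?thesis
    by (simp add: w_def l_def)
qed

lemma sym_matrix_eigenvector_in_subspace:
  fixes A :: "real^'n^'n"
  assumes "sym_matrix A" "subspace V" "\<And>y. y \<in> V \<Longrightarrow> A *v y \<in> V" "V \<noteq> {0}"
  obtains x where "x \<in> V" "norm x = 1" "A *v x = (x \<bullet> (A *v x)) *\<^sub>R x"
proof -
  define K where "K = V \<inter> sphere 0 1"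
  have "compact K"
    unfolding K_def using closed_subspace[OF assms(2)] by (simp add: closed_Int_compact)
  have normalize: "inverse (norm y) *\<^sub>R y \<in> K" if "y \<in> V" "y \<noteq> 0" for y
    unfolding K_def using assms(2) that by (simp add: subspace_scale)
  obtain v where "v \<in> V" "v \<noteq> 0"
    using assms(2,4) subspace_0 by blast
  then have "K \<noteq> {}"
    using normalize by blast
  moreover have "continuous_on K (\<lambda>y. y \<bullet> (A *v y))"
    by (intro continuous_intros linear_continuous_on matrix_vector_mul_bounded_linear)
  ultimately obtain x where "x \<in> K" and x_max: "\<And>y. y \<in> K \<Longrightarrow> y \<bullet> (A *v y) \<le> x \<bullet> (A *v x)"
    using continuous_attains_sup[OF \<open>compact K\<close>] by blast
  then have "x \<in> V" "norm x = 1"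
    by (auto simp: K_def)
  have "y \<bullet> (A *v y) \<le> (x \<bullet> (A *v x)) * (y \<bullet> y)" if "y \<in> V" for y
  proof (cases "y = 0")
    case False
    from x_max[OF normalize[OF that False]] have "inverse (norm y)^2 * (y \<bullet> (A *v y)) \<le> x \<bullet> (A *v x)"
      by (simp add: matrix_vector_mult_scaleR power2_eq_square)
    with False show ?thesis
      by (simp add: field_simps power2_norm_eq_inner[symmetric])
  qed simp
  with assms \<open>x \<in> V\<close> \<open>norm x = 1\<close> have "A *v x = (x \<bullet> (A *v x)) *\<^sub>R x"
    by (intro rayleigh_maximizer_eigenvector) (auto simp: norm_eq_1)
  with \<open>x \<in> V\<close> \<open>norm x = 1\<close> show thesis
    using that by blast
qed

definition orthonormal_eigenvectors :: "real^'n^'n \<Rightarrow> (real^'n) set \<Rightarrow> bool" where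
  "orthonormal_eigenvectors A B \<longleftrightarrow> finite B \<and>
     (\<forall>b\<in>B. \<forall>b'\<in>B. b \<bullet> b' = (if b = b' then 1 else 0)) \<and>
     (\<forall>b\<in>B. A *v b = (b \<bullet> (A *v b)) *\<^sub>R b)"

lemma orthonormal_eigenvectors_nonzero:
  "orthonormal_eigenvectors A B \<Longrightarrow> b \<in> B \<Longrightarrow> b \<noteq> 0"
  unfolding orthonormal_eigenvectors_def by fastforce

lemma orthonormal_eigenvectors_inner_sum:
  assumes "orthonormal_eigenvectors A B" "b \<in> B"
  shows "b \<bullet> (\<Sum>b'\<in>B. f b' *\<^sub>R b') = f b"
proof -
  have "b \<bullet> (\<Sum>b'\<in>B. f b' *\<^sub>R b') = (\<Sum>b'\<in>B. if b' = b then f b' else 0)"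
    unfolding inner_sum_right
    by (rule sum.cong) (use assms in \<open>auto simp: orthonormal_eigenvectors_def\<close>)
  also have "\<dots> = f b"
    using assms by (simp add: orthonormal_eigenvectors_def)
  finally show ?thesis .
qed

lemma sym_matrix_orthogonal_complement_invariant:
  fixes A :: "real^'n^'n"
  assumes "sym_matrix A" "subspace V" "\<And>y. y \<in> V \<Longrightarrow> A *v y \<in> V"
    and "x \<in> V" "x \<noteq> 0" "A *v x = l *\<^sub>R x"
  defines "W \<equiv> {w \<in> V. w \<bullet> x = 0}"
  shows "subspace W" "\<And>w. w \<in> W \<Longrightarrow> A *v w \<in> W" "dim W < dim V"
proof -
  show "subspace W"
    using assms(2) unfolding W_def subspace_def by (auto simp: inner_add_left)
  show "A *v w \<in> W" if "w \<in> W" for w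
    using that assms(3) sym_matrix_inner[OF assms(1), of w x] assms(6)
    by (auto simp: W_def)
  show "dim W < dim V"
  proof (rule dim_psubset)
    have "x \<notin> W"
      using \<open>x \<noteq> 0\<close> by (simp add: W_def)
    with \<open>x \<in> V\<close> have "W \<subset> V"
      unfolding W_def by blast
    then show "span W \<subset> span V"
      using \<open>subspace W\<close> assms(2) by (metis span_eq_iff)
  qed
qed

lemma sym_matrix_orthonormal_eigenbasis_of_subspace:
  fixes A :: "real^'n^'n"
  assumes "sym_matrix A"
  shows "subspace V \<Longrightarrow> (\<And>y. y \<in> V \<Longrightarrow> A *v y \<in> V) \<Longrightarrow>
    \<exists>B. orthonormal_eigenvectors A B \<and> B \<subseteq> V \<and> (\<forall>v\<in>V. v = (\<Sum>b\<in>B. (b \<bullet> v) *\<^sub>R b))"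
proof (induction "dim V" arbitrary: V rule: less_induct)
  case less
  show ?case
  proof (cases "V = {0}")
    case True
    then show ?thesis
      by (intro exI[of _ "{}"]) (auto simp: orthonormal_eigenvectors_def)
  next
    case False
    obtain x where x: "x \<in> V" "x \<bullet> x = 1" "A *v x = (x \<bullet> (A *v x)) *\<^sub>R x"
      using sym_matrix_eigenvector_in_subspace[OF assms less.prems False] by (metis norm_eq_1)
    define W where "W = {w \<in> V. w \<bullet> x = 0}"
    have "x \<noteq> 0"
      using x(2) by auto
    note W = sym_matrix_orthogonal_complement_invariant[OF assms less.prems x(1) \<open>x \<noteq> 0\<close> x(3),
        folded W_def]
    obtain B where B: "orthonormal_eigenvectors A B" "B \<subseteq> W"
      and expand: "\<forall>w\<in>W. w = (\<Sum>b\<in>B. (b \<bullet> w) *\<^sub>R b)"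
      using less.hyps[OF W(3) W(1,2)] by blast
    have "x \<notin> B" "\<And>b. b \<in> B \<Longrightarrow> b \<bullet> x = 0"
      using \<open>B \<subseteq> W\<close> x(2) unfolding W_def by auto
    then have "orthonormal_eigenvectors A (insert x B)"
      using B(1) x by (auto simp: orthonormal_eigenvectors_def inner_commute)
    moreover have "v = (\<Sum>b\<in>insert x B. (b \<bullet> v) *\<^sub>R b)" if "v \<in> V" for v
    proof -
      define w where "w = v - (x \<bullet> v) *\<^sub>R x"
      have "w \<in> W"
        unfolding W_def w_def using that x less.prems(1)
        by (simp add: subspace_diff subspace_scale inner_diff_left inner_diff_right inner_commute)
      then have "w = (\<Sum>b\<in>B. (b \<bullet> w) *\<^sub>R b)"
        using expand by blast
      also have "\<dots> = (\<Sum>b\<in>B. (b \<bullet> v) *\<^sub>R b)"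
        using \<open>\<And>b. b \<in> B \<Longrightarrow> b \<bullet> x = 0\<close> by (simp add: w_def inner_diff_right)
      finally show ?thesis
        using B(1) \<open>x \<notin> B\<close> by (simp add: w_def orthonormal_eigenvectors_def algebra_simps)
    qed
    ultimately show ?thesis
      using \<open>B \<subseteq> W\<close> x(1) unfolding W_def by blast
  qed
qed

lemma sym_matrix_orthonormal_eigenbasis:
  fixes A :: "real^'n^'n"
  assumes "sym_matrix A"
  obtains B where "orthonormal_eigenvectors A B" "\<And>v. v = (\<Sum>b\<in>B. (b \<bullet> v) *\<^sub>R b)"
  using sym_matrix_orthonormal_eigenbasis_of_subspace[OF assms, of UNIV] by auto

lemma sym_matrix_weighted_projections:
  fixes B :: "(real^'n) set" and g :: "real^'n \<Rightarrow> real"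
  obtains S :: "real^'n^'n"
  where "sym_matrix S" "\<And>x. S *v x = (\<Sum>b\<in>B. (g b * (b \<bullet> x)) *\<^sub>R b)"
proof -
  define f where "f x = (\<Sum>b\<in>B. (g b * (b \<bullet> x)) *\<^sub>R b)" for x
  have "linear f"
    by (rule linearI) (simp_all add: f_def algebra_simps sum.distrib scaleR_sum_right)
  then have S: "matrix f *v x = f x" for x
    by simp
  moreover have "sym_matrix (matrix f)"
    by (rule sym_matrixI) (simp add: S f_def inner_sum_left inner_sum_right inner_commute mult_ac)
  ultimately show thesis
    using that by (simp add: f_def)
qed

lemma pos_def_sqrt_exists:
  fixes A :: "real^'n^'n"
  assumes "pos_def A"
  obtains S where "pos_def S" "S ** S = A"
proof -
  obtain B where B: "orthonormal_eigenvectors A B"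
    and expand: "\<And>v. v = (\<Sum>b\<in>B. (b \<bullet> v) *\<^sub>R b)"
    using sym_matrix_orthonormal_eigenbasis assms unfolding pos_def_def by blast
  define root where "root b = sqrt (b \<bullet> (A *v b))" for b
  have root_pos: "root b > 0" if "b \<in> B" for b
    using assms orthonormal_eigenvectors_nonzero[OF B that] unfolding pos_def_def root_def by simp
  have eigen: "A *v b = (root b)^2 *\<^sub>R b" if "b \<in> B" for b
    using B that root_pos[OF that] unfolding orthonormal_eigenvectors_def root_def by auto
  obtain S where "sym_matrix S" and S: "\<And>x. S *v x = (\<Sum>b\<in>B. (root b * (b \<bullet> x)) *\<^sub>R b)"
    using sym_matrix_weighted_projections[where B = B and g = root] by blast
  moreover have "x \<bullet> (S *v x) > 0" if "x \<noteq> 0" for x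
  proof -
    have "\<exists>b\<in>B. b \<bullet> x \<noteq> 0"
    proof (rule ccontr)
      assume "\<not> ?thesis"
      then have "(\<Sum>b\<in>B. (b \<bullet> x) *\<^sub>R b) = 0"
        by simp
      with expand[of x] \<open>x \<noteq> 0\<close> show False
        by simp
    qed
    then obtain b where "b \<in> B" "b \<bullet> x \<noteq> 0" ..
    have "x \<bullet> (S *v x) = (\<Sum>b\<in>B. root b * (b \<bullet> x)^2)"
      by (simp add: S inner_sum_right inner_commute power2_eq_square mult_ac)
    also have "\<dots> > 0"
      using B \<open>b \<in> B\<close> \<open>b \<bullet> x \<noteq> 0\<close> root_pos
      by (intro sum_pos2[of B b]) (auto simp: orthonormal_eigenvectors_def less_imp_le)
    finally show ?thesis .
  qed
  moreover have "S ** S = A"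
  proof (rule matrix_eq[THEN iffD2], rule allI)
    fix x
    have "(S ** S) *v x = (\<Sum>b\<in>B. ((root b)^2 * (b \<bullet> x)) *\<^sub>R b)"
      unfolding matrix_vector_mul_assoc[symmetric] S[of "S *v x"]
      by (rule sum.cong) (simp_all add: S orthonormal_eigenvectors_inner_sum[OF B] power2_eq_square)
    also have "\<dots> = A *v (\<Sum>b\<in>B. (b \<bullet> x) *\<^sub>R b)"
      by (simp add: vec.sum matrix_vector_mult_scaleR eigen mult.commute)
    also have "\<dots> = A *v x"
      by (simp only: expand[of x, symmetric])
    finally show "(S ** S) *v x = A *v x" .
  qed
  ultimately show thesis
    using that unfolding pos_def_def by blast
qed

lemma sym_matrix_eq_0_if_eigenvalues_0:
  fixes E :: "real^'n^'n"
  assumes "sym_matrix E" and eigenvalue_0: "\<And>b d. b \<noteq> 0 \<Longrightarrow> E *v b = d *\<^sub>R b \<Longrightarrow> d = 0"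
  shows "E = 0"
proof -
  obtain B where B: "orthonormal_eigenvectors E B"
    and expand: "\<And>v. v = (\<Sum>b\<in>B. (b \<bullet> v) *\<^sub>R b)"
    using sym_matrix_orthonormal_eigenbasis[OF assms(1)] by blast
  have "E *v b = 0" if "b \<in> B" for b
    using B that eigenvalue_0[OF orthonormal_eigenvectors_nonzero[OF B that]]
    unfolding orthonormal_eigenvectors_def by force
  then have "E *v x = 0" for x
    by (subst expand[of x]) (simp add: vec.sum matrix_vector_mult_scaleR)
  then show ?thesis
    by (simp add: matrix_eq)
qed

lemma pos_def_sqrt_unique:
  fixes S T :: "real^'n^'n"
  assumes "pos_def S" "pos_def T" "S ** S = T ** T"
  shows "S = T"
proof -
  define E where "E = S - T"
  have "sym_matrix E"
    using assms(1,2) unfolding E_def pos_def_def sym_matrix_def by (simp add: transpose_diff)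
  have "S ** E + E ** T = 0"
    using assms(3) by (simp add: E_def matrix_ring_simps)
  have "d = 0" if "b \<noteq> 0" and Eb: "E *v b = d *\<^sub>R b" for b d
  proof -
    have "S *v (E *v b) + E *v (T *v b) = 0"
      using \<open>S ** E + E ** T = 0\<close>
      by (simp add: matrix_vector_mul_assoc flip: matrix_vector_mult_add_rdistrib)
    then have "b \<bullet> (S *v (E *v b)) + (E *v b) \<bullet> (T *v b) = 0"
      using sym_matrix_inner[OF \<open>sym_matrix E\<close>, of b "T *v b"]
      by (metis inner_add_right inner_zero_right)
    then have "d * (b \<bullet> (S *v b) + b \<bullet> (T *v b)) = 0"
      by (simp add: Eb algebra_simps)
    moreover have "b \<bullet> (S *v b) + b \<bullet> (T *v b) > 0"
      using assms(1,2) \<open>b \<noteq> 0\<close> unfolding pos_def_def by (simp add: add_pos_pos)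
    ultimately show ?thesis
      by simp
  qed
  then have "E = 0"
    by (rule sym_matrix_eq_0_if_eigenvalues_0[OF \<open>sym_matrix E\<close>])
  then show ?thesis
    by (simp add: E_def)
qed

lemma matrix_sqrt_eqI:
  "pos_def S \<Longrightarrow> S ** S = A \<Longrightarrow> matrix_sqrt A = S"
  unfolding matrix_sqrt_def by (rule the_equality) (auto intro: pos_def_sqrt_unique)

lemma
  assumes "pos_def A"
  shows pos_def_matrix_sqrt: "pos_def (matrix_sqrt A)"
    and matrix_sqrt_square: "matrix_sqrt A ** matrix_sqrt A = A"
  using pos_def_sqrt_exists[OF assms] matrix_sqrt_eqI by metis+

definition pos_semidef :: "real^'n^'n \<Rightarrow> bool" where
  "pos_semidef A \<longleftrightarrow> sym_matrix A \<and> (\<forall>x. 0 \<le> x \<bullet> (A *v x))"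

lemma pos_def_imp_pos_semidef: "pos_def A \<Longrightarrow> pos_semidef A"
  unfolding pos_def_def pos_semidef_def by (metis inner_zero_left order.refl less_imp_le)

lemma pos_semidef_square:
  assumes "sym_matrix R"
  shows "pos_semidef (R ** R)"
  unfolding pos_semidef_def
proof
  show "sym_matrix (R ** R)"
    using assms unfolding sym_matrix_def by (simp add: matrix_transpose_mul)
  show "\<forall>x. 0 \<le> x \<bullet> ((R ** R) *v x)"
    using sym_matrix_inner[OF assms, of _ "R *v _", symmetric] by (simp flip: matrix_vector_mul_assoc)
qed

lemma pos_semidef_congruence:
  assumes "sym_matrix T" "pos_semidef M"
  shows "pos_semidef (T ** M ** T)"
  unfolding pos_semidef_def
proof
  show "sym_matrix (T ** M ** T)"
    using assms unfolding pos_semidef_def sym_matrix_def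
    by (simp add: matrix_transpose_mul matrix_mul_assoc)
  show "\<forall>x. 0 \<le> x \<bullet> ((T ** M ** T) *v x)"
  proof
    fix x
    have "x \<bullet> ((T ** M ** T) *v x) = (T *v x) \<bullet> (M *v (T *v x))"
      using sym_matrix_inner[OF assms(1), of x "M *v (T *v x)"]
      by (simp flip: matrix_vector_mul_assoc)
    then show "0 \<le> x \<bullet> ((T ** M ** T) *v x)"
      using assms(2) unfolding pos_semidef_def by simp
  qed
qed

lemma pos_def_mat_1_add:
  assumes "pos_semidef M"
  shows "pos_def (mat 1 + M)"
  unfolding pos_def_def
proof
  show "sym_matrix (mat 1 + M)"
    using assms unfolding pos_semidef_def sym_matrix_def by (simp add: transpose_add)
  show "\<forall>x. x \<noteq> 0 \<longrightarrow> 0 < x \<bullet> ((mat 1 + M) *v x)"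
    using assms unfolding pos_semidef_def
    by (simp add: matrix_vector_mult_add_rdistrib inner_add_right add_pos_nonneg)
qed

lemma pos_def_invertible:
  assumes "pos_def A"
  shows "invertible A"
proof -
  have "\<forall>x. A *v x = 0 \<longrightarrow> x = 0"
    using assms unfolding pos_def_def by (metis inner_zero_right less_irrefl)
  then show ?thesis
    using invertible_left_inverse matrix_left_invertible_ker by blast
qed

lemma pos_def_matrix_inv:
  assumes "pos_def A"
  shows "pos_def (matrix_inv A)"
proof -
  have A_inv: "A *v (matrix_inv A *v x) = x" for x
    using matrix_inv_right[OF pos_def_invertible[OF assms]]
    by (simp add: matrix_vector_mul_assoc)
  have "sym_matrix A"
    using assms unfolding pos_def_def by simp
  have "sym_matrix (matrix_inv A)"
  proof (rule sym_matrixI)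
    fix x y
    show "(matrix_inv A *v x) \<bullet> y = x \<bullet> (matrix_inv A *v y)"
      using sym_matrix_inner[OF \<open>sym_matrix A\<close>, of "matrix_inv A *v x" "matrix_inv A *v y"]
      by (simp add: A_inv)
  qed
  moreover have "0 < x \<bullet> (matrix_inv A *v x)" if "x \<noteq> 0" for x
  proof -
    define u where "u = matrix_inv A *v x"
    have "u \<noteq> 0"
      using A_inv[of x] that by (auto simp: u_def)
    then have "0 < u \<bullet> (A *v u)"
      using assms unfolding pos_def_def by simp
    also have "u \<bullet> (A *v u) = x \<bullet> (matrix_inv A *v x)"
      by (simp add: u_def A_inv inner_commute)
    finally show ?thesis .
  qed
  ultimately show ?thesis
    unfolding pos_def_def by blast
qed

lemma square_mat_1_add_congruence:
  fixes R Y :: "real^'n^'n"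
  shows "(mat 1 + R ** Y ** R) ** (mat 1 + R ** Y ** R)
    = mat 1 + R ** (2 *\<^sub>R Y + Y ** (R ** R) ** Y) ** R"
  unfolding scaleR_2 by (simp only: matrix_ring_simps matrix_mul_lid matrix_mul_rid add.assoc)

lemma matrix_inv_mat_1_add_square_root:
  fixes P M :: "real^'n^'n"
  assumes "P ** P = mat 1 + M" and "invertible (mat 1 + P)"
  shows "2 *\<^sub>R matrix_inv (mat 1 + P) + matrix_inv (mat 1 + P) ** M ** matrix_inv (mat 1 + P)
    = mat 1"
proof -
  define K where "K = matrix_inv (mat 1 + P)"
  have KN: "K ** (mat 1 + P) = mat 1" and NK: "(mat 1 + P) ** K = mat 1"
    using assms(2) by (simp_all add: K_def matrix_inv_left matrix_inv_right)
  have "M = (mat 1 + P) ** (P - mat 1)"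
    using assms(1) by (simp add: matrix_ring_simps)
  then have "K ** M ** K = (P - mat 1) ** K"
    by (simp add: matrix_mul_assoc KN)
  then have "2 *\<^sub>R K + K ** M ** K = (mat 1 + P) ** K"
    unfolding scaleR_2 by (simp add: matrix_ring_simps)
  then show ?thesis
    using NK unfolding K_def by simp
qed

lemma matrix_sqrt_mat_1_add_congruence:
  fixes R T :: "real^'n^'n"
  assumes "sym_matrix R" "sym_matrix T"
  defines "K \<equiv> matrix_inv (mat 1 + matrix_sqrt (mat 1 + T ** (R ** R) ** T))"
  shows "matrix_sqrt (mat 1 + R ** (T ** T) ** R) = mat 1 + R ** (T ** K ** T) ** R"
proof (rule matrix_sqrt_eqI)
  define P where "P = matrix_sqrt (mat 1 + T ** (R ** R) ** T)"
  have "pos_def (mat 1 + T ** (R ** R) ** T)"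
    using assms(2) pos_semidef_square[OF assms(1)] by (simp add: pos_def_mat_1_add pos_semidef_congruence)
  then have "pos_def P" "P ** P = mat 1 + T ** (R ** R) ** T"
    unfolding P_def by (simp_all add: pos_def_matrix_sqrt matrix_sqrt_square)
  then have "pos_def (mat 1 + P)"
    by (simp add: pos_def_mat_1_add pos_def_imp_pos_semidef)
  then have "pos_def K" "invertible (mat 1 + P)"
    by (simp_all add: K_def P_def pos_def_matrix_inv pos_def_invertible)
  have "2 *\<^sub>R K + K ** (T ** (R ** R) ** T) ** K = mat 1"
    unfolding K_def P_def[symmetric] by (rule matrix_inv_mat_1_add_square_root) fact+
  then have "T ** (2 *\<^sub>R K + K ** (T ** (R ** R) ** T) ** K) ** T = T ** T"
    by simp
  then show "(mat 1 + R ** (T ** K ** T) ** R) ** (mat 1 + R ** (T ** K ** T) ** R)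
      = mat 1 + R ** (T ** T) ** R"
    unfolding square_mat_1_add_congruence by (simp add: matrix_ring_simps)
  show "pos_def (mat 1 + R ** (T ** K ** T) ** R)"
    using assms(1,2) pos_def_imp_pos_semidef[OF \<open>pos_def K\<close>]
    by (simp add: pos_def_mat_1_add pos_semidef_congruence)
qed

theorem lemma1:
  fixes C D :: "real^'n^'n" and \<epsilon> :: real
  assumes "\<epsilon> > 0" and "pos_def C" and "pos_def D"
  shows "(4 / \<epsilon>) *\<^sub>R (matrix_sqrt D ** matrix_inv (mat 1 + matrix_sqrt (mat 1 + (16 / \<epsilon>^2) *\<^sub>R (matrix_sqrt D ** C ** matrix_sqrt D))) ** matrix_sqrt D)
       = mat 1 - (\<epsilon> / 4) *\<^sub>R (matrix_inv (matrix_sqrt C) ** (mat 1 + (4 / \<epsilon>) *\<^sub>R C - matrix_sqrt (mat 1 + (16 / \<epsilon>^2) *\<^sub>R (matrix_sqrt C ** D ** matrix_sqrt C))) ** matrix_inv (matrix_sqrt C))"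
proof -
  define a where "a = 4 / \<epsilon>"
  define R where "R = matrix_sqrt C"
  define T where "T = a *\<^sub>R matrix_sqrt D"
  define K where "K = matrix_inv (mat 1 + matrix_sqrt (mat 1 + T ** C ** T))"
  have "a > 0" "16 / \<epsilon>^2 = a^2" "\<epsilon> / 4 = 1 / a"
    using assms(1) by (simp_all add: a_def power2_eq_square)
  have "pos_def R" "R ** R = C"
    unfolding R_def using assms(2) by (simp_all add: pos_def_matrix_sqrt matrix_sqrt_square)
  have "sym_matrix T" "T ** T = a^2 *\<^sub>R D"
    using pos_def_matrix_sqrt[OF assms(3)] matrix_sqrt_square[OF assms(3)]
    by (simp_all add: T_def pos_def_def sym_matrix_def transpose_scalar matrix_ring_simps power2_eq_square)
  then have "matrix_sqrt (mat 1 + a^2 *\<^sub>R (R ** D ** R)) = mat 1 + R ** (T ** K ** T) ** R"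
    using matrix_sqrt_mat_1_add_congruence[of R T] \<open>pos_def R\<close> \<open>R ** R = C\<close>
    by (simp add: K_def pos_def_def matrix_ring_simps)
  moreover have "mat 1 + a *\<^sub>R C - (mat 1 + R ** (T ** K ** T) ** R) = R ** (a *\<^sub>R mat 1 - T ** K ** T) ** R"
    by (simp add: matrix_ring_simps flip: \<open>R ** R = C\<close>)
  moreover have "(16 / \<epsilon>^2) *\<^sub>R (matrix_sqrt D ** C ** matrix_sqrt D) = T ** C ** T"
    unfolding \<open>16 / \<epsilon>^2 = a^2\<close> by (simp add: T_def matrix_ring_simps power2_eq_square)
  moreover have "a *\<^sub>R (matrix_sqrt D ** K ** matrix_sqrt D) = (1 / a) *\<^sub>R (T ** K ** T)"
    using \<open>a > 0\<close> by (simp add: T_def matrix_ring_simps power2_eq_square)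
  ultimately show ?thesis
    using matrix_inv_congruence_cancel[OF pos_def_invertible[OF \<open>pos_def R\<close>]] \<open>a > 0\<close>
    by (simp add: \<open>16 / \<epsilon>^2 = a^2\<close> \<open>\<epsilon> / 4 = 1 / a\<close> flip: a_def R_def K_def)
      (simp add: scaleR_diff_right)
qed

end
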